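(* Let $U$ be a finite set, and let $S_1,S_2,\dots,S_{2^{|U|}}$ be any ordering of all subsets of $U$. For nonempty $V\subseteq U$ define $V^0=V$ and, for $r\ge0$, $V^{r+1}=V^r\setminus S_{r+1}$ if $S_{r+1}$ crosses $V^r$ and $V^{r+1}=V^r$ otherwise; the final set $V^{2^{|U|}}$ is a singleton $\{p\}$, and we say "$p$ is last in $V$". Then for any sets $T\subseteq V\subseteq U$ and any point $p\in V\setminus T$: if $p$ is last in $V$, then $p$ is last in $V\setminus T$.
   Context: A set $A$ crosses a set $B$ if both $B\cap A$ and $B\setminus A$ are nonempty. In the paper the ordering arises randomly: given weights $z_S\ge0$ for $S\subseteq U$, independent exponential random variables $X_S\sim\exp(z_S)$ are drawn for sets with $z_S>0$, sets are ordered by increasing $X_S$, and sets with $z_S=0$ are appended in a fixed arbitrary order; the statement holds for every outcome of this ordering. *)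

theory Defs
  imports Main
begin

definition crosses :: "'a set \<Rightarrow> 'a set \<Rightarrow> bool" where
  "crosses A B \<longleftrightarrow> B \<inter> A \<noteq> {} \<and> B - A \<noteq> {}"

definition cut_step :: "'a set \<Rightarrow> 'a set \<Rightarrow> 'a set" where
  "cut_step S V = (if crosses S V then V - S else V)"

text \<open>The final set V^(2^|U|) for the ordering given as the list Ss = [S_1, ..., S_m];
  fold processes S_1 first.\<close>
definition final_set :: "'a set list \<Rightarrow> 'a set \<Rightarrow> 'a set" where
  "final_set Ss V = fold cut_step Ss V"

definition last_in :: "'a set list \<Rightarrow> 'a \<Rightarrow> 'a set \<Rightarrow> bool" where
  "last_in Ss p V \<longleftrightarrow> final_set Ss V = {p}"

end

theory Submission
  imports Defs
begin

text \<open>The cutting process is monotone along any point it keeps: if \<open>p \<in> W \<subseteq> V\<close> and a cut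
  keeps \<open>p\<close> in \<open>V\<close>, then it also keeps \<open>p\<close> in \<open>W\<close> and leaves a subset of what it leaves of \<open>V\<close>.
  Iterating, the final set of \<open>V - T\<close> contains \<open>p\<close> and lies inside the final set \<open>{p}\<close> of \<open>V\<close>.
  This works for every list of sets.\<close>

lemma final_set_Nil [simp]: "final_set [] V = V"
  and final_set_Cons [simp]: "final_set (S # Ss) V = final_set Ss (cut_step S V)"
  by (simp_all add: final_set_def)

lemma cut_step_subset: "cut_step S V \<subseteq> V"
  by (simp add: cut_step_def)

lemma final_set_subset: "final_set Ss V \<subseteq> V"
proof (induction Ss arbitrary: V)
  case (Cons S Ss)
  then show ?case
    using cut_step_subset[of S V] by fastforce
qed simp

lemma cut_step_survivor:
  assumes "p \<in> W" "W \<subseteq> V" "p \<in> cut_step S V"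
  shows "p \<in> cut_step S W" and "cut_step S W \<subseteq> cut_step S V"
  using assms unfolding cut_step_def crosses_def by (auto split: if_splits)

lemma final_set_survivor:
  assumes "p \<in> W" "W \<subseteq> V" "p \<in> final_set Ss V"
  shows "p \<in> final_set Ss W \<and> final_set Ss W \<subseteq> final_set Ss V"
  using assms
proof (induction Ss arbitrary: V W)
  case Nil
  then show ?case by simp
next
  case (Cons S Ss)
  have "p \<in> cut_step S V"
    using Cons.prems(3) final_set_subset[of Ss "cut_step S V"] by auto
  then have "p \<in> cut_step S W" "cut_step S W \<subseteq> cut_step S V"
    using cut_step_survivor Cons.prems(1,2) by metis+
  then show ?case
    using Cons.IH[of "cut_step S W" "cut_step S V"] Cons.prems(3) by simp
qed

theorem lemma2p4:
  fixes U :: "'a set" and Ss :: "'a set list" and T V :: "'a set" and p :: 'a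
  assumes "finite U"
    and "distinct Ss" and "set Ss = Pow U"
    and "T \<subseteq> V" and "V \<subseteq> U"
    and "p \<in> V - T"
    and "last_in Ss p V"
  shows "last_in Ss p (V - T)"
proof -
  have final_V: "final_set Ss V = {p}"
    using \<open>last_in Ss p V\<close> by (simp add: last_in_def)
  have "p \<in> final_set Ss (V - T) \<and> final_set Ss (V - T) \<subseteq> {p}"
    using final_set_survivor[of p "V - T" V Ss] \<open>p \<in> V - T\<close> final_V by auto
  then show ?thesis
    by (auto simp: last_in_def)
qed

end
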